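(* Let $\mathcal{C}\subset\mathbb{R}^n$ be closed and Clarke regular, $f:\mathbb{R}^n\to\mathbb{R}^n$ continuous and $G:\mathcal{C}\to\mathbb{S}^n_+$ a continuous metric, with $\gamma\ge\sup_{x\in\mathcal{C}}\|f(x)\|_{G(x)}$ finite. Then the inclusion $\dot x\in F(x):=f(x)-N^G_x\mathcal{C}\cap\gamma\mathbb{B}$, $x\in\mathcal{C}$, is well-posed.
   Context: $\mathbb{B}$ is the closed unit ball; $\|u\|_{G(x)}:=(u^TG(x)u)^{1/2}$. $T_x\mathcal{C}$ is the tangent cone ($v\in T_x\mathcal{C}$ iff $x_k\to x$ in $\mathcal{C}$, $\delta_k\to0^+$ with $(x_k-x)/\delta_k\to v$); Clarke regular means $x\mapsto T_x\mathcal{C}$ is inner semicontinuous. $N^G_x\mathcal{C}:=\{\eta:\eta^TG(x)v\le0\ \forall v\in T_x\mathcal{C}\}$. An inclusion $\dot x\in H(x)$, $x\in\mathcal{C}$, is well-posed if $\mathcal{C}$ is closed, $H$ is outer semicontinuous and locally bounded relative to $\mathcal{C}$, and $H(x)$ is non-empty and convex for all $x\in\mathcal{C}$. *)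

theory Defs
  imports "HOL-Analysis.Analysis"
begin

definition tangent_cone :: "('a::real_normed_vector) set \<Rightarrow> 'a \<Rightarrow> 'a set" where
  "tangent_cone C x = {v. \<exists>xs::nat \<Rightarrow> 'a. \<exists>\<delta>::nat \<Rightarrow> real.
      (\<forall>k. xs k \<in> C) \<and> xs \<longlonglongrightarrow> x \<and> (\<forall>k. \<delta> k > 0) \<and> \<delta> \<longlonglongrightarrow> 0 \<and>
      (\<lambda>k. (1 / \<delta> k) *\<^sub>R (xs k - x)) \<longlonglongrightarrow> v}"

definition inner_semicontinuous_on :: "'a::metric_space set \<Rightarrow> ('a \<Rightarrow> 'b::metric_space set) \<Rightarrow> bool" where
  "inner_semicontinuous_on C H \<longleftrightarrow> (\<forall>x\<in>C. \<forall>v\<in>H x. \<forall>xs::nat \<Rightarrow> 'a.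
      (\<forall>k. xs k \<in> C) \<and> xs \<longlonglongrightarrow> x \<longrightarrow>
      (\<exists>vs::nat \<Rightarrow> 'b. (\<forall>k. vs k \<in> H (xs k)) \<and> vs \<longlonglongrightarrow> v))"

definition clarke_regular :: "('a::real_normed_vector) set \<Rightarrow> bool" where
  "clarke_regular C \<longleftrightarrow> inner_semicontinuous_on C (tangent_cone C)"

definition outer_semicontinuous_on :: "'a::metric_space set \<Rightarrow> ('a \<Rightarrow> 'b::metric_space set) \<Rightarrow> bool" where
  "outer_semicontinuous_on C H \<longleftrightarrow> (\<forall>x\<in>C. \<forall>xs::nat \<Rightarrow> 'a. \<forall>vs::nat \<Rightarrow> 'b. \<forall>v.
      (\<forall>k. xs k \<in> C) \<and> xs \<longlonglongrightarrow> x \<and> (\<forall>k. vs k \<in> H (xs k)) \<and> vs \<longlonglongrightarrow> v \<longrightarrow> v \<in> H x)"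

definition locally_bounded_on :: "'a::metric_space set \<Rightarrow> ('a \<Rightarrow> 'b::metric_space set) \<Rightarrow> bool" where
  "locally_bounded_on C H \<longleftrightarrow> (\<forall>x\<in>C. \<exists>U. open U \<and> x \<in> U \<and> bounded (\<Union>y\<in>U \<inter> C. H y))"

definition well_posed :: "('a::real_normed_vector) set \<Rightarrow> ('a \<Rightarrow> 'a set) \<Rightarrow> bool" where
  "well_posed C H \<longleftrightarrow> closed C \<and> outer_semicontinuous_on C H \<and> locally_bounded_on C H \<and>
      (\<forall>x\<in>C. H x \<noteq> {} \<and> convex (H x))"

definition pos_def_sym :: "real^'n^'n \<Rightarrow> bool" where
  "pos_def_sym A \<longleftrightarrow> transpose A = A \<and> (\<forall>u. u \<noteq> 0 \<longrightarrow> u \<bullet> (A *v u) > 0)"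

definition G_norm :: "(real^'n::finite \<Rightarrow> real^'n^'n) \<Rightarrow> real^'n \<Rightarrow> real^'n \<Rightarrow> real" where
  "G_norm G x u = sqrt (u \<bullet> (G x *v u))"

definition G_normal_cone :: "(real^'n::finite \<Rightarrow> real^'n^'n) \<Rightarrow> (real^'n) set \<Rightarrow> real^'n \<Rightarrow> (real^'n) set" where
  "G_normal_cone G C x = {\<eta>. \<forall>v\<in>tangent_cone C x. \<eta> \<bullet> (G x *v v) \<le> 0}"

end

theory Submission
  imports Defs
begin

text \<open>The G-normal cone is the polar of the tangent cone with respect to the inner product
  given by G(x), hence convex and containing 0. Its graph is closed because of Clarke regularity:
  each tangent vector at a limit point is approximated by tangent vectors at the approximating
  points, and the polar inequalities pass to the limit by continuity of G. Intersecting with the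
  ball \<gamma>\<B> and translating by the continuous f keeps convexity and outer semicontinuity and adds
  local boundedness; nonemptiness holds since \<gamma> bounds the G(x)-norm of f x,
  which is nonnegative.\<close>

definition shifted_truncation ::
    "('a \<Rightarrow> 'b::real_normed_vector) \<Rightarrow> ('a \<Rightarrow> 'b set) \<Rightarrow> real \<Rightarrow> 'a \<Rightarrow> 'b set" where
  "shifted_truncation f N \<gamma> x = {f x - \<eta> | \<eta>. \<eta> \<in> N x \<inter> cball 0 \<gamma>}"

lemma shifted_truncation_eq_image:
  "shifted_truncation f N \<gamma> x = (\<lambda>\<eta>. f x - \<eta>) ` (N x \<inter> cball 0 \<gamma>)"
  by (auto simp: shifted_truncation_def)

lemma shifted_truncation_nonempty:
  assumes "0 \<in> N x" and "0 \<le> \<gamma>"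
  shows "shifted_truncation f N \<gamma> x \<noteq> {}"
  using assms by (auto simp: shifted_truncation_eq_image)

lemma convex_shifted_truncation:
  assumes "convex (N x)"
  shows "convex (shifted_truncation f N \<gamma> x)"
proof -
  have "convex (N x \<inter> cball 0 \<gamma>)"
    using assms by (intro convex_Int convex_cball)
  then have "convex ((+) (f x) ` uminus ` (N x \<inter> cball 0 \<gamma>))"
    by (intro convex_translation convex_negations)
  then show ?thesis
    by (simp add: shifted_truncation_eq_image image_image)
qed

lemma locally_bounded_on_shifted_truncation:
  fixes f :: "'a::metric_space \<Rightarrow> 'b::real_normed_vector"
  assumes "continuous_on C f"
  shows "locally_bounded_on C (shifted_truncation f N \<gamma>)"
  unfolding locally_bounded_on_def
proof
  fix x assume "x \<in> C"
  then obtain e where "e > 0" and e: "\<And>y. y \<in> C \<Longrightarrow> dist y x < e \<Longrightarrow> dist (f y) (f x) < 1"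
    using assms unfolding continuous_on_iff by (metis zero_less_one)
  have "(\<Union>y\<in>ball x e \<inter> C. shifted_truncation f N \<gamma> y) \<subseteq> cball 0 (norm (f x) + 1 + \<gamma>)"
  proof (clarsimp simp: shifted_truncation_def)
    fix y and \<eta> :: 'b
    assume "dist x y < e" "y \<in> C" "norm \<eta> \<le> \<gamma>"
    moreover have "norm (f y) \<le> norm (f x) + dist (f y) (f x)"
      by (metis dist_norm norm_triangle_sub)
    ultimately show "norm (f y - \<eta>) \<le> norm (f x) + 1 + \<gamma>"
      using e[of y] norm_triangle_ineq4[of "f y" \<eta>] by (simp add: dist_commute)
  qed
  then show "\<exists>U. open U \<and> x \<in> U \<and> bounded (\<Union>y\<in>U \<inter> C. shifted_truncation f N \<gamma> y)"
    using \<open>e > 0\<close> by (meson bounded_cball bounded_subset centre_in_ball open_ball)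
qed

lemma outer_semicontinuous_on_shifted_truncation:
  fixes f :: "'a::metric_space \<Rightarrow> 'b::real_normed_vector"
  assumes "continuous_on C f" and "outer_semicontinuous_on C N"
  shows "outer_semicontinuous_on C (shifted_truncation f N \<gamma>)"
  unfolding outer_semicontinuous_on_def
proof (intro ballI allI impI, elim conjE)
  fix x xs vs v
  assume x: "x \<in> C" and xs: "\<forall>k. xs k \<in> C" and xs_lim: "xs \<longlonglongrightarrow> x"
    and vs: "\<forall>k. vs k \<in> shifted_truncation f N \<gamma> (xs k)" and vs_lim: "vs \<longlonglongrightarrow> v"
  define \<eta>s where "\<eta>s k = f (xs k) - vs k" for k
  have \<eta>s_normal: "\<eta>s k \<in> N (xs k)" and \<eta>s_bound: "norm (\<eta>s k) \<le> \<gamma>" for k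
    using vs[rule_format, of k] by (auto simp: \<eta>s_def shifted_truncation_def)
  have "(\<lambda>k. f (xs k)) \<longlonglongrightarrow> f x"
    using continuous_on_tendsto_compose[OF assms(1) xs_lim x] xs by auto
  then have \<eta>s_lim: "\<eta>s \<longlonglongrightarrow> f x - v"
    unfolding \<eta>s_def using vs_lim by (rule tendsto_diff)
  have "f x - v \<in> N x"
    using assms(2) x xs xs_lim \<eta>s_normal \<eta>s_lim unfolding outer_semicontinuous_on_def by blast
  moreover have "norm (f x - v) \<le> \<gamma>"
    using \<eta>s_bound by (intro tendsto_upperbound[OF tendsto_norm[OF \<eta>s_lim]]) auto
  ultimately show "v \<in> shifted_truncation f N \<gamma> x"
    by (force simp: shifted_truncation_def)
qed

lemma tendsto_matrix_vector_mult:
  fixes A :: "nat \<Rightarrow> real^'n^'m" and w :: "nat \<Rightarrow> real^'n"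
  assumes "A \<longlonglongrightarrow> B" and "w \<longlonglongrightarrow> v"
  shows "(\<lambda>k. A k *v w k) \<longlonglongrightarrow> B *v v"
proof (rule vec_tendstoI)
  fix i
  have "(\<lambda>k. \<Sum>j\<in>UNIV. A k $ i $ j * w k $ j) \<longlonglongrightarrow> (\<Sum>j\<in>UNIV. B $ i $ j * v $ j)"
    by (intro tendsto_intros tendsto_vec_nth assms)
  then show "(\<lambda>k. (A k *v w k) $ i) \<longlonglongrightarrow> (B *v v) $ i"
    by (simp add: matrix_vector_mult_def)
qed

lemma zero_in_G_normal_cone: "0 \<in> G_normal_cone G C x"
  by (simp add: G_normal_cone_def)

lemma convex_G_normal_cone:
  fixes G :: "real^'n \<Rightarrow> real^'n^'n"
  shows "convex (G_normal_cone G C x)"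
  unfolding G_normal_cone_def convex_def
proof (intro allI impI ballI, safe)
  fix a b w :: "real^'n" and u v :: real
  assume a: "\<forall>w\<in>tangent_cone C x. a \<bullet> (G x *v w) \<le> 0"
    and b: "\<forall>w\<in>tangent_cone C x. b \<bullet> (G x *v w) \<le> 0"
    and uv: "0 \<le> u" "0 \<le> v" and w: "w \<in> tangent_cone C x"
  have "(u *\<^sub>R a + v *\<^sub>R b) \<bullet> (G x *v w) = u * (a \<bullet> (G x *v w)) + v * (b \<bullet> (G x *v w))"
    by (simp add: inner_add_left)
  also have "\<dots> \<le> 0"
    using a b w uv by (meson add_nonpos_nonpos mult_nonneg_nonpos)
  finally show "(u *\<^sub>R a + v *\<^sub>R b) \<bullet> (G x *v w) \<le> 0" .
qed

lemma outer_semicontinuous_on_G_normal_cone: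
  assumes "clarke_regular C" and "continuous_on C G"
  shows "outer_semicontinuous_on C (G_normal_cone G C)"
  unfolding outer_semicontinuous_on_def
proof (intro ballI allI impI, elim conjE)
  fix x xs \<eta>s \<eta>
  assume x: "x \<in> C" and xs: "\<forall>k. xs k \<in> C" and xs_lim: "xs \<longlonglongrightarrow> x"
    and \<eta>s: "\<forall>k. \<eta>s k \<in> G_normal_cone G C (xs k)" and \<eta>s_lim: "\<eta>s \<longlonglongrightarrow> \<eta>"
  have G_lim: "(\<lambda>k. G (xs k)) \<longlonglongrightarrow> G x"
    using continuous_on_tendsto_compose[OF assms(2) xs_lim x] xs by auto
  show "\<eta> \<in> G_normal_cone G C x"
    unfolding G_normal_cone_def
  proof (intro CollectI ballI)
    fix w assume "w \<in> tangent_cone C x"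
    then obtain ws where ws: "\<And>k. ws k \<in> tangent_cone C (xs k)" and ws_lim: "ws \<longlonglongrightarrow> w"
      using assms(1) x xs xs_lim unfolding clarke_regular_def inner_semicontinuous_on_def by meson
    have "(\<lambda>k. \<eta>s k \<bullet> (G (xs k) *v ws k)) \<longlonglongrightarrow> \<eta> \<bullet> (G x *v w)"
      by (intro tendsto_inner \<eta>s_lim tendsto_matrix_vector_mult G_lim ws_lim)
    moreover have "\<eta>s k \<bullet> (G (xs k) *v ws k) \<le> 0" for k
      using \<eta>s ws unfolding G_normal_cone_def by blast
    ultimately show "\<eta> \<bullet> (G x *v w) \<le> 0"
      using LIMSEQ_le_const2 by blast
  qed
qed

lemma G_norm_nonneg:
  assumes "pos_def_sym (G x)"
  shows "0 \<le> G_norm G x u"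
proof -
  have "0 \<le> u \<bullet> (G x *v u)"
    using assms unfolding pos_def_sym_def by (cases "u = 0") (auto intro: less_imp_le)
  then show ?thesis
    by (simp add: G_norm_def)
qed

theorem lemma2p12:
  fixes C :: "(real^'n) set"
    and f :: "real^'n \<Rightarrow> real^'n"
    and G :: "real^'n \<Rightarrow> real^'n^'n"
    and \<gamma> :: real
  assumes "closed C"
    and "clarke_regular C"
    and "continuous_on UNIV f"
    and "continuous_on C G"
    and "\<forall>x\<in>C. pos_def_sym (G x)"
    and "\<forall>x\<in>C. G_norm G x (f x) \<le> \<gamma>"
  shows "well_posed C (\<lambda>x. {f x - \<eta> | \<eta>. \<eta> \<in> G_normal_cone G C x \<inter> cball 0 \<gamma>})"
proof -
  have F: "(\<lambda>x. {f x - \<eta> | \<eta>. \<eta> \<in> G_normal_cone G C x \<inter> cball 0 \<gamma>})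
      = shifted_truncation f (G_normal_cone G C) \<gamma>"
    unfolding shifted_truncation_def ..
  have f: "continuous_on C f"
    using assms(3) by (rule continuous_on_subset) simp
  have "0 \<le> \<gamma>" if "x \<in> C" for x
    using G_norm_nonneg[of G x "f x"] assms(5,6) that by fastforce
  then have "\<forall>x\<in>C. shifted_truncation f (G_normal_cone G C) \<gamma> x \<noteq> {}"
    by (simp add: shifted_truncation_nonempty zero_in_G_normal_cone)
  then show ?thesis
    unfolding well_posed_def F
    using assms(1) convex_shifted_truncation[where N = "G_normal_cone G C", OF convex_G_normal_cone]
      locally_bounded_on_shifted_truncation[OF f]
      outer_semicontinuous_on_shifted_truncation[OF f outer_semicontinuous_on_G_normal_cone[OF assms(2,4)]]
    by blast
qed

end
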